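(* Let $n,m\in\mathbb{N}$ be fixed. For all $X,Y\in \mathrm{IS}^{\mathrm{br}}_{n,m}$: $X \approx_{\mathrm{sa}} Y$ only if there exists an $l\in\mathbb{N}$ such that for all $b'_1,\ldots,b'_l\in\{0,1\}$ there exist $b''_1,\ldots,b''_l\in\{0,1\}$ such that for all $b_1,\ldots,b_n\in\{0,1\}$, writing $I=\{\mathrm{in}_i.\mathrm{BR}_{b_i}\mid 1\le i\le n\}$, $A'=\{\mathrm{aux}_i.\mathrm{BR}_{b'_i}\mid 1\le i\le l\}$, $A''=\{\mathrm{aux}_i.\mathrm{BR}_{b''_i}\mid 1\le i\le l\}$ and $O=\{\mathrm{out}_i.\mathrm{BR}_{0}\mid 1\le i\le m\}$: $$\mathrm{apply}(\mathrm{use}(|X|, I\cup A'),\,O)=\mathrm{apply}(\mathrm{use}(|Y|, I\cup A''),\,O)$$ and $$\mathrm{depth}\big(\mathrm{tuse}(\mathrm{tuse}(|X|, I\cup A'),\,O)\big)=\mathrm{depth}\big(\mathrm{tuse}(\mathrm{tuse}(|Y|, I\cup A''),\,O)\big).$$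
   Context: Foci (register names) are $\mathrm{in}_i,\mathrm{aux}_i,\mathrm{out}_i$ for $i\ge1$; methods are $\mathrm{set}{:}0,\mathrm{set}{:}1,\mathrm{get}$. The basic instructions are $\mathrm{BI}_{n,m}=\{f.\mathrm{get}\mid f\in\{\mathrm{in}_1..\mathrm{in}_n\}\cup\{\mathrm{aux}_i\mid i\ge1\}\}\cup\{f.\mathrm{set}{:}b\mid f\in\{\mathrm{aux}_i\mid i\ge1\}\cup\{\mathrm{out}_1..\mathrm{out}_m\},b\in\{0,1\}\}$; $\mathrm{focus}(f.m)=f$. Primitive instructions: for $a\in\mathrm{BI}_{n,m}$ the plain instruction $a$, positive test $+a$, negative test $-a$; forward jumps $\#l$ ($l\in\mathbb{N}$); termination $!$. $\mathrm{IS}^{\mathrm{br}}_{n,m}$ is the set of finite nonempty sequences of primitive instructions, written $u_1;\dots;u_k$. Threads: finite terms built from $\mathsf{S}$ (termination), $\mathsf{D}$ (inaction) and postconditional composition $x\trianglelefteq a\trianglerighteq y$ for basic actions $a$, where basic actions are the $f.m$ and also the trace actions $\langle f.m\rangle r$ ($r\in\{0,1\}$); threads are equal iff syntactically equal; $a\circ x$ abbreviates $x\trianglelefteq a\trianglerighteq x$. $\mathrm{depth}(\mathsf S)=\mathrm{depth}(\mathsf D)=0$, $\mathrm{depth}(x\trianglelefteq a\trianglerighteq y)=\max(\mathrm{depth}(x),\mathrm{depth}(y))+1$. Thread extraction $|\cdot|$ ($u$ primitive, $X$ a nonempty sequence): $|a|=a\circ\mathsf D$, $|a;X|=a\circ|X|$,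 $|{+a}|=|{-a}|=a\circ\mathsf D$, $|{+a};X|=|X|\trianglelefteq a\trianglerighteq|\#2;X|$, $|{-a};X|=|\#2;X|\trianglelefteq a\trianglerighteq|X|$, $|\#l|=\mathsf D$, $|\#0;X|=\mathsf D$, $|\#1;X|=|X|$, $|\#(l+2);u|=\mathsf D$, $|\#(l+2);u;X|=|\#(l+1);X|$, $|!|=|!;X|=\mathsf S$. (Execution: tests run $a$ and skip the next instruction if the reply is $0$ for $+a$, $1$ for $-a$.) A register family $F$ is a finite set of pairs $f.\mathrm{BR}_b$ ($b\in\{0,1\}$, Boolean register named $f$ with content $b$) with pairwise distinct foci; $\emptyset$ is the empty family. Processing method $m$ on $\mathrm{BR}_b$: $\mathrm{set}{:}c$ gives reply $c$ and new content $c$; $\mathrm{get}$ gives reply $b$ and leaves content $b$. If $f.\mathrm{BR}_b\in F$ and $m$ yields reply $r$ and new content $b'$, let $F'$ be $F$ with $f.\mathrm{BR}_b$ replaced by $f.\mathrm{BR}_{b'}$. Abstracting use: $\mathrm{use}(\mathsf S,F)=\mathsf S$, $\mathrm{use}(\mathsf D,F)=\mathsf D$; if $f$ is not a focus in $F$, $\mathrm{use}(x\trianglelefteq f.m\trianglerighteq y,F)=\mathrm{use}(x,F)\trianglelefteq f.m\trianglerighteq\mathrm{use}(y,F)$; otherwise it equals $\mathrm{use}(x,F')$ if $r=1$ and $\mathrm{use}(y,F')$ if $r=0$; $\mathrm{use}(x\trianglelefteq\langle f.m\rangle r\trianglerighteq y,F)=\langle f.m\rangle r\circ\mathrm{use}(x,F)$.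 Apply (result is a register family): $\mathrm{apply}(\mathsf S,F)=F$, $\mathrm{apply}(\mathsf D,F)=\emptyset$; if $f$ not a focus in $F$, $\mathrm{apply}(x\trianglelefteq f.m\trianglerighteq y,F)=\emptyset$; otherwise it equals $\mathrm{apply}(x,F')$ if $r=1$, $\mathrm{apply}(y,F')$ if $r=0$; $\mathrm{apply}(x\trianglelefteq\langle f.m\rangle r\trianglerighteq y,F)=\mathrm{apply}(x,F)$. Tracking use: $\mathrm{tuse}(\mathsf S,F)=\mathsf S$, $\mathrm{tuse}(\mathsf D,F)=\mathsf D$; if $f$ not a focus in $F$, $\mathrm{tuse}(x\trianglelefteq f.m\trianglerighteq y,F)=\mathrm{tuse}(x,F)\trianglelefteq f.m\trianglerighteq\mathrm{tuse}(y,F)$; otherwise it equals $\langle f.m\rangle 1\circ\mathrm{tuse}(x,F')$ if $r=1$ and $\langle f.m\rangle 0\circ\mathrm{tuse}(y,F')$ if $r=0$; $\mathrm{tuse}(x\trianglelefteq\langle f.m\rangle r\trianglerighteq y,F)=\langle f.m\rangle r\circ\mathrm{tuse}(x,F)$. Equivalences on $\mathrm{IS}^{\mathrm{br}}_{n,m}$: (i) $X\approx_{\mathrm b}Y$ iff $|X|=|Y|$. (ii) $X\approx_{\mathrm x}Y$ iff $Y=\chi_I(X)$ for some finite $I\subset\mathbb{N}_{>0}$, where $\chi_I$ acts instruction-wise: for $f=\mathrm{aux}_i$ with $i\in I$, $f.m\mapsto f.\chi''(m)$, $+f.m\mapsto -f.\chi''(m)$, $-f.m\mapsto +f.\chi''(m)$,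 with $\chi''$ swapping $\mathrm{set}{:}0$ and $\mathrm{set}{:}1$ and fixing $\mathrm{get}$; all other instructions unchanged. (iii) $X\approx_{\mathrm r}Y$ iff $Y=\rho_r(X)$ for some bijection $r$ of $\mathbb{N}_{>0}$, where $\rho_r$ replaces instruction-wise every focus $\mathrm{aux}_i$ by $\mathrm{aux}_{r(i)}$ (in plain, positive and negative test instructions) and leaves everything else unchanged. (iv) $X\approx_{\mathrm t}Y$ iff $|X|\approx'_{\mathrm t}|Y|$, where $\approx'_{\mathrm t}$ is the smallest relation on finite threads over $\mathrm{BI}_{n,m}$ such that: if $\mathrm{focus}(a)\ne\mathrm{focus}(b)$ then $(x\trianglelefteq b\trianglerighteq y)\trianglelefteq a\trianglerighteq(x'\trianglelefteq b\trianglerighteq y')\approx'_{\mathrm t}(x\trianglelefteq a\trianglerighteq x')\trianglelefteq b\trianglerighteq(y\trianglelefteq a\trianglerighteq y')$; it is reflexive and transitive; and $x\approx'_{\mathrm t}x'$, $y\approx'_{\mathrm t}y'$ imply $x\trianglelefteq a\trianglerighteq y\approx'_{\mathrm t}x'\trianglelefteq a\trianglerighteq y'$. The structural algorithmic equivalence $\approx_{\mathrm{sa}}$ is the smallest relation containing $\approx_{\mathrm b},\approx_{\mathrm x},\approx_{\mathrm r},\approx_{\mathrm t}$ and closed under transitivity. *)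

theory Defs
  imports Main
begin

datatype focus = In nat | Aux nat | Out nat
datatype meth = Set0 | Set1 | Get
datatype binstr = BI focus meth

fun focus_of :: "binstr \<Rightarrow> focus" where
  "focus_of (BI f m) = f"

definition BI_set :: "nat \<Rightarrow> nat \<Rightarrow> binstr set" where
  "BI_set n m =
     {BI f Get | f. (\<exists>i. 1 \<le> i \<and> i \<le> n \<and> f = In i) \<or> (\<exists>i. 1 \<le> i \<and> f = Aux i)}
   \<union> {BI f s | f s. s \<in> {Set0, Set1} \<and>
        ((\<exists>i. 1 \<le> i \<and> f = Aux i) \<or> (\<exists>i. 1 \<le> i \<and> i \<le> m \<and> f = Out i))}"

datatype instr = Plain binstr | PosT binstr | NegT binstr | Jump nat | Term

fun instr_ok :: "nat \<Rightarrow> nat \<Rightarrow> instr \<Rightarrow> bool" where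
  "instr_ok n m (Plain a) = (a \<in> BI_set n m)"
| "instr_ok n m (PosT a) = (a \<in> BI_set n m)"
| "instr_ok n m (NegT a) = (a \<in> BI_set n m)"
| "instr_ok n m (Jump l) = True"
| "instr_ok n m Term = True"

definition IS :: "nat \<Rightarrow> nat \<Rightarrow> instr list set" where
  "IS n m = {X. X \<noteq> [] \<and> (\<forall>u \<in> set X. instr_ok n m u)}"

datatype action = Basic binstr | Trace binstr bool

datatype thread = S | D | PC thread action thread

definition act :: "action \<Rightarrow> thread \<Rightarrow> thread" where
  "act a x = PC x a x"

fun depth :: "thread \<Rightarrow> nat" where
  "depth S = 0"
| "depth D = 0"
| "depth (PC x a y) = max (depth x) (depth y) + 1"

fun jweight :: "instr list \<Rightarrow> nat" where
  "jweight [] = 0"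
| "jweight (Jump l # X) = 2 * length X + 1"
| "jweight (u # X) = 2 * length X + 2"

lemma jweight_le: "jweight (u # X) \<le> 2 * length X + 2"
  by (cases u) auto

function extr :: "instr list \<Rightarrow> thread" where
  "extr [] = D"
| "extr [Plain a] = act (Basic a) D"
| "extr (Plain a # u # X) = act (Basic a) (extr (u # X))"
| "extr [PosT a] = act (Basic a) D"
| "extr (PosT a # u # X) = PC (extr (u # X)) (Basic a) (extr (Jump 2 # u # X))"
| "extr [NegT a] = act (Basic a) D"
| "extr (NegT a # u # X) = PC (extr (Jump 2 # u # X)) (Basic a) (extr (u # X))"
| "extr [Jump l] = D"
| "extr (Jump 0 # u # X) = D"
| "extr (Jump (Suc 0) # u # X) = extr (u # X)"
| "extr [Jump (Suc (Suc l)), u] = D"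
| "extr (Jump (Suc (Suc l)) # u # v # X) = extr (Jump (Suc l) # v # X)"
| "extr (Term # X) = S"
  by pat_completeness auto
termination
  by (relation "measure jweight") (auto intro: le_less_trans[OF jweight_le])

text \<open>A register family is represented as a finite partial map from foci to
  register contents (pairwise distinct foci are automatic).\<close>
type_synonym regfam = "focus \<Rightarrow> bool option"

fun proc :: "meth \<Rightarrow> bool \<Rightarrow> bool \<times> bool" where
  "proc Set0 b = (False, False)"
| "proc Set1 b = (True, True)"
| "proc Get b = (b, b)"

fun use_rf :: "thread \<Rightarrow> regfam \<Rightarrow> thread" where
  "use_rf S F = S"
| "use_rf D F = D"
| "use_rf (PC x (Basic (BI f m)) y) F =
     (case F f of
        None \<Rightarrow> PC (use_rf x F) (Basic (BI f m)) (use_rf y F)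
      | Some b \<Rightarrow> (let (r, b') = proc m b in
                   if r then use_rf x (F(f \<mapsto> b')) else use_rf y (F(f \<mapsto> b'))))"
| "use_rf (PC x (Trace a r) y) F = act (Trace a r) (use_rf x F)"

fun apply_rf :: "thread \<Rightarrow> regfam \<Rightarrow> regfam" where
  "apply_rf S F = F"
| "apply_rf D F = Map.empty"
| "apply_rf (PC x (Basic (BI f m)) y) F =
     (case F f of
        None \<Rightarrow> Map.empty
      | Some b \<Rightarrow> (let (r, b') = proc m b in
                   if r then apply_rf x (F(f \<mapsto> b')) else apply_rf y (F(f \<mapsto> b'))))"
| "apply_rf (PC x (Trace a r) y) F = apply_rf x F"

fun tuse_rf :: "thread \<Rightarrow> regfam \<Rightarrow> thread" where
  "tuse_rf S F = S"
| "tuse_rf D F = D"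
| "tuse_rf (PC x (Basic (BI f m)) y) F =
     (case F f of
        None \<Rightarrow> PC (tuse_rf x F) (Basic (BI f m)) (tuse_rf y F)
      | Some b \<Rightarrow> (let (r, b') = proc m b in
                   if r then act (Trace (BI f m) True) (tuse_rf x (F(f \<mapsto> b')))
                   else act (Trace (BI f m) False) (tuse_rf y (F(f \<mapsto> b')))))"
| "tuse_rf (PC x (Trace a r) y) F = act (Trace a r) (tuse_rf x F)"

definition beq :: "nat \<Rightarrow> nat \<Rightarrow> instr list \<Rightarrow> instr list \<Rightarrow> bool" where
  "beq n m X Y \<longleftrightarrow> X \<in> IS n m \<and> Y \<in> IS n m \<and> extr X = extr Y"

fun chi_m :: "meth \<Rightarrow> meth" where
  "chi_m Set0 = Set1"
| "chi_m Set1 = Set0"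
| "chi_m Get = Get"

fun chi :: "nat set \<Rightarrow> instr \<Rightarrow> instr" where
  "chi I (Plain (BI (Aux i) mt)) = (if i \<in> I then Plain (BI (Aux i) (chi_m mt)) else Plain (BI (Aux i) mt))"
| "chi I (PosT (BI (Aux i) mt)) = (if i \<in> I then NegT (BI (Aux i) (chi_m mt)) else PosT (BI (Aux i) mt))"
| "chi I (NegT (BI (Aux i) mt)) = (if i \<in> I then PosT (BI (Aux i) (chi_m mt)) else NegT (BI (Aux i) mt))"
| "chi I u = u"

definition xeq :: "nat \<Rightarrow> nat \<Rightarrow> instr list \<Rightarrow> instr list \<Rightarrow> bool" where
  "xeq n m X Y \<longleftrightarrow> X \<in> IS n m \<and> Y \<in> IS n m \<and>
     (\<exists>I. finite I \<and> I \<subseteq> {0<..} \<and> Y = map (chi I) X)"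

fun rho_f :: "(nat \<Rightarrow> nat) \<Rightarrow> focus \<Rightarrow> focus" where
  "rho_f r (Aux i) = Aux (r i)"
| "rho_f r f = f"

fun rho :: "(nat \<Rightarrow> nat) \<Rightarrow> instr \<Rightarrow> instr" where
  "rho r (Plain (BI f mt)) = Plain (BI (rho_f r f) mt)"
| "rho r (PosT (BI f mt)) = PosT (BI (rho_f r f) mt)"
| "rho r (NegT (BI f mt)) = NegT (BI (rho_f r f) mt)"
| "rho r u = u"

definition req :: "nat \<Rightarrow> nat \<Rightarrow> instr list \<Rightarrow> instr list \<Rightarrow> bool" where
  "req n m X Y \<longleftrightarrow> X \<in> IS n m \<and> Y \<in> IS n m \<and>
     (\<exists>r. bij_betw r {0<..} {0<..} \<and> Y = map (rho r) X)"

fun thread_over :: "nat \<Rightarrow> nat \<Rightarrow> thread \<Rightarrow> bool" where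
  "thread_over n m S = True"
| "thread_over n m D = True"
| "thread_over n m (PC x (Basic a) y) = (a \<in> BI_set n m \<and> thread_over n m x \<and> thread_over n m y)"
| "thread_over n m (PC x (Trace a r) y) = False"

inductive teq' :: "nat \<Rightarrow> nat \<Rightarrow> thread \<Rightarrow> thread \<Rightarrow> bool" for n m where
  swap: "\<lbrakk> a \<in> BI_set n m; b \<in> BI_set n m; focus_of a \<noteq> focus_of b;
           thread_over n m x; thread_over n m y; thread_over n m x'; thread_over n m y' \<rbrakk> \<Longrightarrow>
         teq' n m (PC (PC x (Basic b) y) (Basic a) (PC x' (Basic b) y'))
                  (PC (PC x (Basic a) x') (Basic b) (PC y (Basic a) y'))"
| refl: "thread_over n m x \<Longrightarrow> teq' n m x x"
| trans: "\<lbrakk> teq' n m x y; teq' n m y z \<rbrakk> \<Longrightarrow> teq' n m x z"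
| cong: "\<lbrakk> a \<in> BI_set n m; teq' n m x x'; teq' n m y y' \<rbrakk> \<Longrightarrow>
         teq' n m (PC x (Basic a) y) (PC x' (Basic a) y')"

definition teq :: "nat \<Rightarrow> nat \<Rightarrow> instr list \<Rightarrow> instr list \<Rightarrow> bool" where
  "teq n m X Y \<longleftrightarrow> X \<in> IS n m \<and> Y \<in> IS n m \<and> teq' n m (extr X) (extr Y)"

definition saeq :: "nat \<Rightarrow> nat \<Rightarrow> instr list \<Rightarrow> instr list \<Rightarrow> bool" where
  "saeq n m = tranclp (\<lambda>X Y. beq n m X Y \<or> xeq n m X Y \<or> req n m X Y \<or> teq n m X Y)"

definition in_regs :: "nat \<Rightarrow> (nat \<Rightarrow> bool) \<Rightarrow> regfam" where
  "in_regs n b = (\<lambda>f. case f of In i \<Rightarrow> (if 1 \<le> i \<and> i \<le> n then Some (b i) else None) | _ \<Rightarrow> None)"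

definition aux_regs :: "nat \<Rightarrow> (nat \<Rightarrow> bool) \<Rightarrow> regfam" where
  "aux_regs l b = (\<lambda>f. case f of Aux i \<Rightarrow> (if 1 \<le> i \<and> i \<le> l then Some (b i) else None) | _ \<Rightarrow> None)"

definition out_regs :: "nat \<Rightarrow> regfam" where
  "out_regs m = (\<lambda>f. case f of Out i \<Rightarrow> (if 1 \<le> i \<and> i \<le> m then Some False else None) | _ \<Rightarrow> None)"

end

theory Submission
  imports Defs
begin

text \<open>Each generating equivalence of \<open>\<approx>\<^sub>s\<^sub>a\<close> can be undone by a suitable choice of the
  initial auxiliary contents. For \<open>\<approx>\<^sub>b\<close> and \<open>\<approx>\<^sub>t\<close> none is needed: the threads are equal, or
  differ only in the order of tests on distinct registers, which no register family can
  observe. \<open>\<chi>\<^sub>I\<close> is undone by complementing the initial contents of the auxiliary registers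
  in \<open>I\<close>, and \<open>\<rho>\<^sub>r\<close> by permuting them along \<open>r\<close>, provided there are enough auxiliary registers
  to hold all those used together with their images. As the number of auxiliary registers
  therefore only needs a lower bound, the relation "for all sufficiently many auxiliary
  registers, every initialisation for \<open>X\<close> is matched by one for \<open>Y\<close>" is transitive, and it
  contains all four generators.\<close>

fun reply :: "meth \<Rightarrow> bool \<Rightarrow> bool" where
  "reply Set0 b = False"
| "reply Set1 b = True"
| "reply Get b = b"

lemma proc_eq_reply: "proc mt b = (reply mt b, reply mt b)"
  by (cases mt) auto

lemma use_rf_Basic [simp]:
  "use_rf (PC x (Basic (BI f mt)) y) F =
     (case F f of
        None \<Rightarrow> PC (use_rf x F) (Basic (BI f mt)) (use_rf y F)
      | Some b \<Rightarrow> if reply mt b then use_rf x (F(f \<mapsto> True)) else use_rf y (F(f \<mapsto> False)))"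
  by (simp add: proc_eq_reply split: option.split)

lemma apply_rf_Basic [simp]:
  "apply_rf (PC x (Basic (BI f mt)) y) F =
     (case F f of
        None \<Rightarrow> Map.empty
      | Some b \<Rightarrow> if reply mt b then apply_rf x (F(f \<mapsto> True)) else apply_rf y (F(f \<mapsto> False)))"
  by (simp add: proc_eq_reply split: option.split)

lemma tuse_rf_Basic [simp]:
  "tuse_rf (PC x (Basic (BI f mt)) y) F =
     (case F f of
        None \<Rightarrow> PC (tuse_rf x F) (Basic (BI f mt)) (tuse_rf y F)
      | Some b \<Rightarrow>
          if reply mt b then act (Trace (BI f mt) True) (tuse_rf x (F(f \<mapsto> True)))
          else act (Trace (BI f mt) False) (tuse_rf y (F(f \<mapsto> False))))"
  by (simp add: proc_eq_reply split: option.split)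

declare use_rf.simps(3) [simp del] apply_rf.simps(3) [simp del] tuse_rf.simps(3) [simp del]

definition obs_equal :: "thread \<Rightarrow> thread \<Rightarrow> bool" where
  "obs_equal x y \<longleftrightarrow> (\<forall>F G. apply_rf (use_rf x F) G = apply_rf (use_rf y F) G \<and>
       depth (tuse_rf (tuse_rf x F) G) = depth (tuse_rf (tuse_rf y F) G))"

lemma obs_equal_swap:
  assumes "fa \<noteq> fb"
  shows "obs_equal (PC (PC x (Basic (BI fb mb)) y) (Basic (BI fa ma)) (PC x' (Basic (BI fb mb)) y'))
                   (PC (PC x (Basic (BI fa ma)) x') (Basic (BI fb mb)) (PC y (Basic (BI fa ma)) y'))"
  using assms unfolding obs_equal_def
  by (auto simp: act_def fun_upd_twist[OF assms] split: option.split)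

lemma obs_equal_cong:
  assumes "obs_equal x x'" and "obs_equal y y'"
  shows "obs_equal (PC x (Basic (BI f mt)) y) (PC x' (Basic (BI f mt)) y')"
  using assms unfolding obs_equal_def
  by (auto simp: act_def split: option.split)

lemma teq'_imp_obs_equal: "teq' n m x y \<Longrightarrow> obs_equal x y"
proof (induction rule: teq'.induct)
  case (swap a b x y x' y')
  then show ?case by (cases a; cases b) (auto intro: obs_equal_swap)
next
  case (cong a x x' y y')
  then show ?case by (cases a) (auto intro: obs_equal_cong)
qed (auto simp: obs_equal_def)

fun flipped :: "nat set \<Rightarrow> focus \<Rightarrow> bool" where
  "flipped I (Aux i) = (i \<in> I)"
| "flipped I (In i) = False"
| "flipped I (Out i) = False"

fun chi_binstr :: "nat set \<Rightarrow> binstr \<Rightarrow> binstr" where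
  "chi_binstr I (BI f mt) = BI f (if flipped I f then chi_m mt else mt)"

fun chi_action :: "nat set \<Rightarrow> action \<Rightarrow> action" where
  "chi_action I (Basic c) = Basic (chi_binstr I c)"
| "chi_action I (Trace c r) = Trace (chi_binstr I c) (if flipped I (focus_of c) then \<not> r else r)"

fun chi_thread :: "nat set \<Rightarrow> thread \<Rightarrow> thread" where
  "chi_thread I S = S"
| "chi_thread I D = D"
| "chi_thread I (PC x (Basic c) y) =
     (if flipped I (focus_of c) then PC (chi_thread I y) (chi_action I (Basic c)) (chi_thread I x)
      else PC (chi_thread I x) (chi_action I (Basic c)) (chi_thread I y))"
| "chi_thread I (PC x (Trace c r) y) = PC (chi_thread I x) (chi_action I (Trace c r)) (chi_thread I y)"

definition flip_regs :: "nat set \<Rightarrow> regfam \<Rightarrow> regfam" where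
  "flip_regs I F = (\<lambda>f. if flipped I f then map_option Not (F f) else F f)"

lemma chi_Plain [simp]: "chi I (Plain a) = Plain (chi_binstr I a)"
  and chi_PosT [simp]:
    "chi I (PosT a) = (if flipped I (focus_of a) then NegT (chi_binstr I a) else PosT (chi_binstr I a))"
  and chi_NegT [simp]:
    "chi I (NegT a) = (if flipped I (focus_of a) then PosT (chi_binstr I a) else NegT (chi_binstr I a))"
  by (cases a, rename_tac f mt, case_tac f, simp_all)+

lemma extr_map_chi: "extr (map (chi I) X) = chi_thread I (extr X)"
  by (induction X rule: extr.induct) (auto simp: act_def)

lemma reply_chi_m: "reply (chi_m mt) (\<not> b) = (\<not> reply mt b)"
  by (cases mt) auto

lemma flip_regs_apply: "flip_regs I F f = (if flipped I f then map_option Not (F f) else F f)"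
  by (simp add: flip_regs_def)

lemma flip_regs_upd:
  "flipped I f \<Longrightarrow> (flip_regs I F)(f \<mapsto> v) = flip_regs I (F(f \<mapsto> \<not> v))"
  "\<not> flipped I f \<Longrightarrow> (flip_regs I F)(f \<mapsto> v) = flip_regs I (F(f \<mapsto> v))"
  by (auto simp: flip_regs_def)

text \<open>Complementing the registers in \<open>I\<close> complements every reply they give, which \<open>\<chi>\<^sub>I\<close>
  compensates by exchanging the branches of the affected tests.\<close>

lemma use_rf_chi_thread: "use_rf (chi_thread I t) (flip_regs I F) = chi_thread I (use_rf t F)"
proof (induction I t arbitrary: F rule: chi_thread.induct)
  case (3 I x c y)
  obtain f mt where c: "c = BI f mt" by (cases c)
  from 3 flip_regs_apply[of I F f] show ?case
    unfolding c by (cases "F f"; cases "flipped I f") (simp_all add: act_def flip_regs_upd reply_chi_m)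
qed (auto simp: act_def)

lemma tuse_rf_chi_thread: "tuse_rf (chi_thread I t) (flip_regs I F) = chi_thread I (tuse_rf t F)"
proof (induction I t arbitrary: F rule: chi_thread.induct)
  case (3 I x c y)
  obtain f mt where c: "c = BI f mt" by (cases c)
  from 3 flip_regs_apply[of I F f] show ?case
    unfolding c by (cases "F f"; cases "flipped I f") (simp_all add: act_def flip_regs_upd reply_chi_m)
qed (auto simp: act_def)

lemma tuse_rf_chi_thread_unflipped:
  assumes "\<forall>f. flipped I f \<longrightarrow> G f = None"
  shows "tuse_rf (chi_thread I t) G = chi_thread I (tuse_rf t G)"
proof -
  from assms have "flip_regs I G = G" by (auto simp: flip_regs_def)
  then show ?thesis using tuse_rf_chi_thread[of I t G] by simp
qed

lemma apply_rf_chi_thread: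
  "\<forall>f. flipped I f \<longrightarrow> G f = None \<Longrightarrow> apply_rf (chi_thread I t) G = apply_rf t G"
proof (induction I t arbitrary: G rule: chi_thread.induct)
  case (3 I x c y)
  obtain f mt where c: "c = BI f mt" by (cases c)
  show ?case
  proof (cases "G f")
    case (Some b)
    with "3.prems" have "\<not> flipped I f" by auto
    with "3.prems" have "\<forall>g. flipped I g \<longrightarrow> (G(f \<mapsto> v)) g = None" for v by auto
    with "3.IH" have "apply_rf (chi_thread I x) (G(f \<mapsto> v)) = apply_rf x (G(f \<mapsto> v))"
      and "apply_rf (chi_thread I y) (G(f \<mapsto> v)) = apply_rf y (G(f \<mapsto> v))" for v
      by blast+
    with Some \<open>\<not> flipped I f\<close> show ?thesis by (simp add: c)
  qed (simp add: c)
qed auto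

lemma depth_chi_thread: "depth (chi_thread I t) = depth t"
  by (induction t rule: chi_thread.induct) auto

fun rename_binstr :: "(focus \<Rightarrow> focus) \<Rightarrow> binstr \<Rightarrow> binstr" where
  "rename_binstr \<phi> (BI f mt) = BI (\<phi> f) mt"

fun rename_action :: "(focus \<Rightarrow> focus) \<Rightarrow> action \<Rightarrow> action" where
  "rename_action \<phi> (Basic c) = Basic (rename_binstr \<phi> c)"
| "rename_action \<phi> (Trace c r) = Trace (rename_binstr \<phi> c) r"

fun rename_thread :: "(focus \<Rightarrow> focus) \<Rightarrow> thread \<Rightarrow> thread" where
  "rename_thread \<phi> S = S"
| "rename_thread \<phi> D = D"
| "rename_thread \<phi> (PC x a y) = PC (rename_thread \<phi> x) (rename_action \<phi> a) (rename_thread \<phi> y)"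

fun foci :: "thread \<Rightarrow> focus set" where
  "foci S = {}"
| "foci D = {}"
| "foci (PC x (Basic c) y) = insert (focus_of c) (foci x \<union> foci y)"
| "foci (PC x (Trace c r) y) = foci x \<union> foci y"

lemma finite_foci: "finite (foci t)"
  by (induction t rule: foci.induct) auto

lemma rho_Plain [simp]: "rho r (Plain a) = Plain (rename_binstr (rho_f r) a)"
  and rho_PosT [simp]: "rho r (PosT a) = PosT (rename_binstr (rho_f r) a)"
  and rho_NegT [simp]: "rho r (NegT a) = NegT (rename_binstr (rho_f r) a)"
  by (cases a; simp)+

lemma extr_map_rho: "extr (map (rho r) X) = rename_thread (rho_f r) (extr X)"
  by (induction X rule: extr.induct) (auto simp: act_def)

lemma depth_rename_thread: "depth (rename_thread \<phi> t) = depth t"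
  by (induction t) auto

lemma renamed_regs_upd:
  assumes "inj_on \<phi> A" and "f \<in> A" and "\<forall>g\<in>A. G (\<phi> g) = F g"
  shows "\<forall>g\<in>A. (G(\<phi> f \<mapsto> v)) (\<phi> g) = (F(f \<mapsto> v)) g"
  using assms by (auto simp: inj_on_def)

lemma use_rf_rename_thread:
  assumes "inj_on \<phi> A" and "foci t \<subseteq> A" and "\<forall>f\<in>A. G (\<phi> f) = F f"
  shows "use_rf (rename_thread \<phi> t) G = rename_thread \<phi> (use_rf t F)"
  using assms(2,3)
proof (induction t arbitrary: F G rule: foci.induct)
  case (3 x c y)
  obtain f mt where c: "c = BI f mt" by (cases c)
  with "3.prems" have f: "f \<in> A" "G (\<phi> f) = F f" by auto
  with "3.prems" "3.IH" renamed_regs_upd[OF assms(1) f(1) "3.prems"(2)] show ?case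
    unfolding c by (cases "F f") auto
qed (auto simp: act_def)

lemma tuse_rf_rename_thread:
  assumes "inj_on \<phi> A" and "foci t \<subseteq> A" and "\<forall>f\<in>A. G (\<phi> f) = F f"
  shows "tuse_rf (rename_thread \<phi> t) G = rename_thread \<phi> (tuse_rf t F)"
  using assms(2,3)
proof (induction t arbitrary: F G rule: foci.induct)
  case (3 x c y)
  obtain f mt where c: "c = BI f mt" by (cases c)
  with "3.prems" have f: "f \<in> A" "G (\<phi> f) = F f" by auto
  with "3.prems" "3.IH" renamed_regs_upd[OF assms(1) f(1) "3.prems"(2)] show ?case
    unfolding c by (cases "F f") (auto simp: act_def)
qed (auto simp: act_def)

definition renaming_fixes :: "(focus \<Rightarrow> focus) \<Rightarrow> regfam \<Rightarrow> bool" where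
  "renaming_fixes \<phi> G \<longleftrightarrow> G \<circ> \<phi> = G \<and> (\<forall>f\<in>dom G. \<phi> f = f)"

lemma renaming_fixes_upd:
  assumes "renaming_fixes \<phi> G" and "f \<in> dom G"
  shows "renaming_fixes \<phi> (G(f \<mapsto> v))"
  unfolding renaming_fixes_def
proof (intro conjI ballI ext)
  fix g
  have "G (\<phi> g) = G g" using assms(1) unfolding renaming_fixes_def by (metis comp_apply)
  moreover have "\<phi> g = g" if "g \<in> dom G" using assms(1) that unfolding renaming_fixes_def by blast
  ultimately show "(G(f \<mapsto> v) \<circ> \<phi>) g = (G(f \<mapsto> v)) g"
    using assms(2) by (cases "\<phi> g = f") (auto simp: domIff)
next
  fix g assume "g \<in> dom (G(f \<mapsto> v))"
  with assms show "\<phi> g = g" unfolding renaming_fixes_def by (auto split: if_splits)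
qed

lemma apply_rf_rename_thread:
  "renaming_fixes \<phi> G \<Longrightarrow> apply_rf (rename_thread \<phi> t) G = apply_rf t G"
proof (induction t arbitrary: G rule: foci.induct)
  case (3 x c y)
  obtain f mt where c: "c = BI f mt" by (cases c)
  show ?case
  proof (cases "G f")
    case (Some b)
    with "3.prems" have "\<phi> f = f" "f \<in> dom G" by (auto simp: renaming_fixes_def)
    with "3.IH" renaming_fixes_upd[OF "3.prems"]
    have "apply_rf (rename_thread \<phi> x) (G(f \<mapsto> v)) = apply_rf x (G(f \<mapsto> v))"
      and "apply_rf (rename_thread \<phi> y) (G(f \<mapsto> v)) = apply_rf y (G(f \<mapsto> v))" for v
      by blast+
    with Some \<open>\<phi> f = f\<close> show ?thesis by (simp add: c)
  next
    case None
    with "3.prems" have "G (\<phi> f) = None" by (metis comp_apply renaming_fixes_def)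
    with None show ?thesis by (simp add: c)
  qed
qed auto

lemma tuse_rf_rename_thread_fixed:
  "renaming_fixes \<phi> G \<Longrightarrow> tuse_rf (rename_thread \<phi> t) G = rename_thread \<phi> (tuse_rf t G)"
proof (induction t arbitrary: G rule: foci.induct)
  case (3 x c y)
  obtain f mt where c: "c = BI f mt" by (cases c)
  show ?case
  proof (cases "G f")
    case (Some b)
    with "3.prems" have "\<phi> f = f" "f \<in> dom G" by (auto simp: renaming_fixes_def)
    with "3.IH" renaming_fixes_upd[OF "3.prems"]
    have "tuse_rf (rename_thread \<phi> x) (G(f \<mapsto> v)) = rename_thread \<phi> (tuse_rf x (G(f \<mapsto> v)))"
      and "tuse_rf (rename_thread \<phi> y) (G(f \<mapsto> v)) = rename_thread \<phi> (tuse_rf y (G(f \<mapsto> v)))" for v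
      by blast+
    with Some \<open>\<phi> f = f\<close> show ?thesis by (simp add: c act_def)
  next
    case None
    with "3.prems" have "G (\<phi> f) = None" by (metis comp_apply renaming_fixes_def)
    with None "3.IH" "3.prems" show ?thesis by (simp add: c)
  qed
qed (auto simp: act_def)

lemma rho_f_fixes_out_regs: "renaming_fixes (rho_f r) (out_regs m)"
proof -
  have "out_regs m (rho_f r f) = out_regs m f" for f
    by (cases f) (simp_all add: out_regs_def)
  moreover have "rho_f r f = f" if "f \<in> dom (out_regs m)" for f
    using that by (cases f) (auto simp: out_regs_def)
  ultimately show ?thesis by (auto simp: renaming_fixes_def)
qed

lemma thread_over_aux_pos: "thread_over n m t \<Longrightarrow> Aux i \<in> foci t \<Longrightarrow> 0 < i"
  by (induction t rule: foci.induct) (auto simp: BI_set_def split: action.splits)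

lemma thread_over_extr: "X \<in> IS n m \<Longrightarrow> thread_over n m (extr X)"
  unfolding IS_def by (induction X rule: extr.induct) (auto simp: act_def)

lemma inj_on_rho_f:
  assumes "inj_on r {0<..}" and "\<And>i. Aux i \<in> A \<Longrightarrow> 0 < i"
  shows "inj_on (rho_f r) A"
proof (rule inj_onI)
  fix f g assume "f \<in> A" "g \<in> A" "rho_f r f = rho_f r g"
  with assms show "f = g" by (cases f; cases g) (auto dest: inj_onD)
qed

definition observation ::
    "nat \<Rightarrow> nat \<Rightarrow> nat \<Rightarrow> (nat \<Rightarrow> bool) \<Rightarrow> (nat \<Rightarrow> bool) \<Rightarrow> instr list \<Rightarrow> regfam \<times> nat" where
  "observation n m l b' b X =
     (apply_rf (use_rf (extr X) (in_regs n b ++ aux_regs l b')) (out_regs m),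
      depth (tuse_rf (tuse_rf (extr X) (in_regs n b ++ aux_regs l b')) (out_regs m)))"

text \<open>Asking for all sufficiently many auxiliary registers, rather than for one number of
  them, makes the relation transitive.\<close>

definition aux_simulated :: "nat \<Rightarrow> nat \<Rightarrow> instr list \<Rightarrow> instr list \<Rightarrow> bool" where
  "aux_simulated n m X Y \<longleftrightarrow>
     (\<exists>L. \<forall>l\<ge>L. \<forall>b'. \<exists>b''. \<forall>b. observation n m l b' b X = observation n m l b'' b Y)"

lemma aux_simulated_trans:
  assumes "aux_simulated n m X Y" and "aux_simulated n m Y Z"
  shows "aux_simulated n m X Z"
proof -
  obtain L1 where L1: "\<forall>l\<ge>L1. \<forall>b'. \<exists>b''. \<forall>b. observation n m l b' b X = observation n m l b'' b Y"
    using assms(1) unfolding aux_simulated_def by blast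
  obtain L2 where L2: "\<forall>l\<ge>L2. \<forall>b'. \<exists>b''. \<forall>b. observation n m l b' b Y = observation n m l b'' b Z"
    using assms(2) unfolding aux_simulated_def by blast
  have "\<exists>b''. \<forall>b. observation n m l b' b X = observation n m l b'' b Z" if "max L1 L2 \<le> l" for l b'
  proof -
    from L1 that obtain c where "\<forall>b. observation n m l b' b X = observation n m l c b Y" by force
    moreover from L2 that obtain d where "\<forall>b. observation n m l c b Y = observation n m l d b Z" by force
    ultimately show ?thesis by auto
  qed
  then show ?thesis unfolding aux_simulated_def by blast
qed

lemma obs_equal_imp_aux_simulated: "obs_equal (extr X) (extr Y) \<Longrightarrow> aux_simulated n m X Y"
  unfolding aux_simulated_def observation_def obs_equal_def by auto

lemma xeq_imp_aux_simulated:
  assumes "xeq n m X Y"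
  shows "aux_simulated n m X Y"
proof -
  obtain I where Y: "Y = map (chi I) X" using assms unfolding xeq_def by blast
  have out: "\<forall>f. flipped I f \<longrightarrow> out_regs m f = None"
    by (auto simp: out_regs_def elim: flipped.elims)
  have "\<exists>b''. \<forall>b. observation n m l b' b X = observation n m l b'' b Y" for l b'
  proof (intro exI allI)
    fix b
    let ?b'' = "\<lambda>i. if i \<in> I then \<not> b' i else b' i"
    have "in_regs n b ++ aux_regs l ?b'' = flip_regs I (in_regs n b ++ aux_regs l b')"
      by (rule ext) (auto simp: flip_regs_def in_regs_def aux_regs_def map_add_def
          split: focus.split option.split)
    then show "observation n m l b' b X = observation n m l ?b'' b Y"
      by (simp add: observation_def Y extr_map_chi use_rf_chi_thread tuse_rf_chi_thread
          apply_rf_chi_thread[OF out] tuse_rf_chi_thread_unflipped[OF out] depth_chi_thread)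
  qed
  then show ?thesis unfolding aux_simulated_def by blast
qed

lemma regs_rho_f:
  assumes "bij_betw r {0<..} {0<..}" and "\<And>i. f = Aux i \<Longrightarrow> 0 < i \<and> i \<le> l \<and> r i \<le> l"
  shows "(in_regs n b ++ aux_regs l (b' \<circ> inv_into {0<..} r)) (rho_f r f)
       = (in_regs n b ++ aux_regs l b') f"
proof (cases f)
  case (Aux i)
  with assms have "0 < i" "i \<le> l" "0 < r i" "r i \<le> l" "inv_into {0<..} r (r i) = i"
    by (auto simp: bij_betw_def inv_into_f_f)
  with Aux show ?thesis by (simp add: in_regs_def aux_regs_def map_add_def)
qed (simp_all add: in_regs_def aux_regs_def map_add_def)

lemma req_imp_aux_simulated:
  assumes "req n m X Y"
  shows "aux_simulated n m X Y"
proof -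
  obtain r where r: "bij_betw r {0<..} {0<..}" and Y: "Y = map (rho r) X"
    using assms unfolding req_def by blast
  define A where "A = foci (extr X)"
  define J where "J = Aux -` A"
  have pos: "\<And>i. Aux i \<in> A \<Longrightarrow> 0 < i"
    using assms thread_over_aux_pos thread_over_extr unfolding req_def A_def by blast
  have inj: "inj_on (rho_f r) A"
    using inj_on_rho_f[OF bij_betw_imp_inj_on[OF r] pos] .
  have "finite J"
    unfolding J_def A_def by (rule finite_vimageI) (auto simp: finite_foci inj_def)
  define L where "L = Max (insert 0 (J \<union> r ` J))"
  have "\<exists>b''. \<forall>b. observation n m l b' b X = observation n m l b'' b Y" if "L \<le> l" for l b'
  proof (intro exI allI)
    fix b
    let ?F = "in_regs n b ++ aux_regs l b'" and ?G = "in_regs n b ++ aux_regs l (b' \<circ> inv_into {0<..} r)"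
    have "\<forall>f\<in>A. ?G (rho_f r f) = ?F f"
    proof
      fix f assume "f \<in> A"
      show "?G (rho_f r f) = ?F f"
      proof (rule regs_rho_f[OF r])
        fix i assume "f = Aux i"
        with \<open>f \<in> A\<close> have "i \<in> J" "0 < i" unfolding J_def using pos by auto
        then have "i \<le> L" "r i \<le> L" using \<open>finite J\<close> unfolding L_def by auto
        with \<open>0 < i\<close> \<open>L \<le> l\<close> show "0 < i \<and> i \<le> l \<and> r i \<le> l" by linarith
      qed
    qed
    note use = use_rf_rename_thread[OF inj _ this] and tuse = tuse_rf_rename_thread[OF inj _ this]
    show "observation n m l b' b X = observation n m l (b' \<circ> inv_into {0<..} r) b Y"
      by (simp add: observation_def Y extr_map_rho A_def use tuse apply_rf_rename_thread
          tuse_rf_rename_thread_fixed rho_f_fixes_out_regs depth_rename_thread)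
  qed
  then show ?thesis unfolding aux_simulated_def by blast
qed

lemma saeq_generator_imp_aux_simulated:
  assumes "beq n m X Y \<or> xeq n m X Y \<or> req n m X Y \<or> teq n m X Y"
  shows "aux_simulated n m X Y"
  using assms
proof (elim disjE)
  assume "beq n m X Y"
  then show ?thesis by (auto simp: beq_def obs_equal_def intro: obs_equal_imp_aux_simulated)
next
  assume "teq n m X Y"
  then show ?thesis by (auto simp: teq_def intro: obs_equal_imp_aux_simulated teq'_imp_obs_equal)
qed (simp_all add: xeq_imp_aux_simulated req_imp_aux_simulated)

lemma saeq_imp_aux_simulated: "saeq n m X Y \<Longrightarrow> aux_simulated n m X Y"
  unfolding saeq_def
proof (induction rule: tranclp_induct)
  case (step Y Z)
  from step.hyps(2) have "aux_simulated n m Y Z" by (rule saeq_generator_imp_aux_simulated)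
  with step.IH show ?case by (rule aux_simulated_trans)
qed (rule saeq_generator_imp_aux_simulated)

theorem theorem1:
  fixes n m :: nat and X Y :: "instr list"
  assumes "X \<in> IS n m" and "Y \<in> IS n m" and "saeq n m X Y"
  shows "\<exists>l. \<forall>b' :: nat \<Rightarrow> bool. \<exists>b'' :: nat \<Rightarrow> bool. \<forall>b :: nat \<Rightarrow> bool.
           apply_rf (use_rf (extr X) (in_regs n b ++ aux_regs l b')) (out_regs m)
             = apply_rf (use_rf (extr Y) (in_regs n b ++ aux_regs l b'')) (out_regs m)
         \<and> depth (tuse_rf (tuse_rf (extr X) (in_regs n b ++ aux_regs l b')) (out_regs m))
             = depth (tuse_rf (tuse_rf (extr Y) (in_regs n b ++ aux_regs l b'')) (out_regs m))"
proof -
  obtain L where "\<forall>l\<ge>L. \<forall>b'. \<exists>b''. \<forall>b. observation n m l b' b X = observation n m l b'' b Y"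
    using saeq_imp_aux_simulated[OF assms(3)] unfolding aux_simulated_def by blast
  then have "\<forall>b'. \<exists>b''. \<forall>b. observation n m L b' b X = observation n m L b'' b Y" by blast
  then show ?thesis unfolding observation_def by auto
qed

end
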